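(* Let $\mathsf{P}=\mathrm{conv}(v_0,\dots,v_r)\subseteq\mathbb{Q}^2$ be a $\mathbb{Q}$-Gorenstein polytope of index $\imath\ge2$. If $\mathsf{P}$ contains two distinct lattice points different from the origin, then $\mathsf{P}$ is not canonical.
   Context: Let $d\ge2$, $r\ge d$ and $v_0:=0,v_1,\dots,v_r\in\mathbb{Q}^d$ pairwise different such that $\mathsf{P}=\mathrm{conv}(v_0,\dots,v_r)$ is full-dimensional with vertex set $\{v_0,\dots,v_r\}$. $\mathsf{P}$ is $\mathbb{Q}$-Gorenstein of index $\imath\in\mathbb{Z}_{\ge1}$ if there exist $\alpha_1,\dots,\alpha_d\in\mathbb{Z}$ with $\sum_{j}\alpha_jv_{ij}=\imath$ for all $i=1,\dots,r$ and $\imath$ is minimal with this property. Such $\mathsf{P}$ is canonical if for every lattice point $0\ne p\in\mathsf{P}$ we have $\sum_j\alpha_jp_j=\imath$. *)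

theory Defs
  imports "HOL-Analysis.Analysis"
begin

definition rat_point :: "real \<times> real \<Rightarrow> bool" where
  "rat_point p \<longleftrightarrow> fst p \<in> \<rat> \<and> snd p \<in> \<rat>"

definition lattice_point :: "real \<times> real \<Rightarrow> bool" where
  "lattice_point p \<longleftrightarrow> fst p \<in> \<int> \<and> snd p \<in> \<int>"

definition polytope :: "(nat \<Rightarrow> real \<times> real) \<Rightarrow> nat \<Rightarrow> (real \<times> real) set" where
  "polytope v r = convex hull (v ` {0..r})"

definition gor_functional :: "(nat \<Rightarrow> real \<times> real) \<Rightarrow> nat \<Rightarrow> int \<Rightarrow> int \<Rightarrow> int \<Rightarrow> bool" where
  "gor_functional v r m a1 a2 \<longleftrightarrow>
     (\<forall>i\<in>{1..r}. of_int a1 * fst (v i) + of_int a2 * snd (v i) = of_int m)"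

definition QGorenstein_index :: "(nat \<Rightarrow> real \<times> real) \<Rightarrow> nat \<Rightarrow> int \<Rightarrow> bool" where
  "QGorenstein_index v r idx \<longleftrightarrow>
     idx \<ge> 1 \<and> (\<exists>a1 a2. gor_functional v r idx a1 a2) \<and>
     (\<forall>m. 1 \<le> m \<and> m < idx \<longrightarrow> \<not> (\<exists>a1 a2. gor_functional v r m a1 a2))"

definition canonical :: "(nat \<Rightarrow> real \<times> real) \<Rightarrow> nat \<Rightarrow> int \<Rightarrow> bool" where
  "canonical v r idx \<longleftrightarrow>
     (\<exists>a1 a2. gor_functional v r idx a1 a2 \<and>
        (\<forall>p\<in>polytope v r. lattice_point p \<and> p \<noteq> 0 \<longrightarrow>
            of_int a1 * fst p + of_int a2 * snd p = of_int idx))"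

end

theory Submission
  imports Defs
begin

text \<open>Suppose P were canonical, with functional \<alpha> and index \<imath>, and let a \<noteq> b be nonzero
lattice points of P, so \<alpha>\<bullet>a = \<alpha>\<bullet>b = \<imath>. Then a and b are linearly independent, and every lattice
point x can be written as x = l a + m b. Subtracting \<lfloor>l\<rfloor> a + \<lfloor>m\<rfloor> b leaves a lattice point y of
the half-open parallelogram spanned by a and b; either y or a + b - y lies in the triangle
conv(0, a, b) \<subseteq> P, so canonicity forces \<alpha>\<bullet>y \<in> {0, \<imath>}, whence \<alpha>\<bullet>x / \<imath> = l + m \<in> \<int>. Applied
to the unit vectors this shows \<alpha>/\<imath> is integral, and \<alpha>/\<imath> certifies index 1, contradicting the
minimality of \<imath> \<ge> 2.\<close>

lemma lattice_point_add: "lattice_point x \<Longrightarrow> lattice_point y \<Longrightarrow> lattice_point (x + y)"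
  by (auto simp: lattice_point_def)

lemma lattice_point_diff: "lattice_point x \<Longrightarrow> lattice_point y \<Longrightarrow> lattice_point (x - y)"
  by (auto simp: lattice_point_def)

lemma lattice_point_of_int_scaleR: "lattice_point x \<Longrightarrow> lattice_point (of_int k *\<^sub>R x)"
  by (auto simp: lattice_point_def)

lemma convex_with_zero_scaleR_add_mem:
  fixes P :: "'a::real_vector set"
  assumes "convex P" "0 \<in> P" "a \<in> P" "b \<in> P" "s \<ge> 0" "t \<ge> 0" "s + t \<le> 1"
  shows "s *\<^sub>R a + t *\<^sub>R b \<in> P"
proof -
  have "convex hull {0, a, b} \<subseteq> P"
    using assms(1-4) by (intro hull_minimal) auto
  moreover have "(1 - s - t) *\<^sub>R 0 + s *\<^sub>R a + t *\<^sub>R b \<in> convex hull {0, a, b}"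
    unfolding convex_hull_3 using assms(5-7)
    by (intro CollectI exI[of _ "1 - s - t"] exI[of _ s] exI[of _ t]) auto
  ultimately show ?thesis by (simp only: scaleR_zero_right add_0_left) blast
qed

lemma cross_nonzero_if_same_level:
  fixes \<alpha> a b :: "real \<times> real"
  assumes "\<alpha> \<bullet> a = c" "\<alpha> \<bullet> b = c" "c \<noteq> 0" "a \<noteq> b"
  shows "fst a * snd b - snd a * fst b \<noteq> 0"
proof
  assume cross: "fst a * snd b - snd a * fst b = 0"
  obtain A1 A2 where \<alpha>: "\<alpha> = (A1, A2)" by fastforce
  have "c * (fst b - fst a) = fst b * (\<alpha> \<bullet> a) - fst a * (\<alpha> \<bullet> b)"
    using assms(1,2) by (simp add: algebra_simps)
  also have "\<dots> = A2 * (fst b * snd a - fst a * snd b)"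
    by (simp add: \<alpha> inner_prod_def algebra_simps)
  finally have "fst a = fst b"
    using cross assms(3) by (simp add: algebra_simps)
  have "c * (snd b - snd a) = snd b * (\<alpha> \<bullet> a) - snd a * (\<alpha> \<bullet> b)"
    using assms(1,2) by (simp add: algebra_simps)
  also have "\<dots> = A1 * (snd b * fst a - snd a * fst b)"
    by (simp add: \<alpha> inner_prod_def algebra_simps)
  finally have "snd a = snd b"
    using cross assms(3) by (simp add: algebra_simps)
  with \<open>fst a = fst b\<close> assms(4) show False by (simp add: prod_eq_iff)
qed

text \<open>Cramer's rule for the basis a, b.\<close>

lemma cross_nonzero_imp_span:
  fixes a b x :: "real \<times> real"
  assumes "fst a * snd b - snd a * fst b \<noteq> 0"
  shows "\<exists>l m. x = l *\<^sub>R a + m *\<^sub>R b"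
proof -
  define D where "D = fst a * snd b - snd a * fst b"
  define l where "l = (fst x * snd b - snd x * fst b) / D"
  define m where "m = (fst a * snd x - snd a * fst x) / D"
  have D: "D \<noteq> 0" using assms by (simp add: D_def)
  have lD: "l * D = fst x * snd b - snd x * fst b" and mD: "m * D = fst a * snd x - snd a * fst x"
    using D by (simp_all add: l_def m_def)
  have "fst x * D = (l * D) * fst a + (m * D) * fst b"
    and "snd x * D = (l * D) * snd a + (m * D) * snd b"
    by (simp_all only: lD mD) (simp_all add: D_def algebra_simps)
  then have "fst x * D = (l * fst a + m * fst b) * D" "snd x * D = (l * snd a + m * snd b) * D"
    by (simp_all add: algebra_simps)
  then have "x = l *\<^sub>R a + m *\<^sub>R b"
    using D by (simp add: prod_eq_iff)
  then show ?thesis by blast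
qed

lemma cross_nonzero_imp_independent:
  fixes a b :: "real \<times> real"
  assumes "fst a * snd b - snd a * fst b \<noteq> 0" "s *\<^sub>R a + t *\<^sub>R b = 0"
  shows "s = 0 \<and> t = 0"
proof -
  define D where "D = fst a * snd b - snd a * fst b"
  have h1: "s * fst a + t * fst b = 0" and h2: "s * snd a + t * snd b = 0"
    using assms(2) by (auto simp: prod_eq_iff)
  have "s * D = snd b * (s * fst a + t * fst b) - fst b * (s * snd a + t * snd b)"
    and "t * D = fst a * (s * snd a + t * snd b) - snd a * (s * fst a + t * fst b)"
    unfolding D_def by (simp_all add: algebra_simps)
  then have "s * D = 0" "t * D = 0" using h1 h2 by simp_all
  then show ?thesis using assms(1) by (simp add: D_def)
qed

lemma lattice_point_frac_combination:
  assumes "lattice_point a" "lattice_point b" "lattice_point (l *\<^sub>R a + m *\<^sub>R b)"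
  shows "lattice_point (frac l *\<^sub>R a + frac m *\<^sub>R b)"
proof -
  have "frac l *\<^sub>R a + frac m *\<^sub>R b
        = (l *\<^sub>R a + m *\<^sub>R b) - of_int \<lfloor>l\<rfloor> *\<^sub>R a - of_int \<lfloor>m\<rfloor> *\<^sub>R b"
    by (simp add: frac_def algebra_simps)
  then show ?thesis
    using assms by (simp add: lattice_point_diff lattice_point_of_int_scaleR)
qed

text \<open>The parallelogram step: a lattice point s a + t b with s, t \<in> [0,1) has s + t \<in> {0, 1}, since
either it or its reflection a + b - (s a + t b) lies in the triangle conv(0, a, b).\<close>

lemma parallelogram_lattice_point_level:
  fixes P :: "(real \<times> real) set" and \<alpha> a b :: "real \<times> real"
  assumes P: "convex P" "0 \<in> P" "a \<in> P" "b \<in> P"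
    and lattice: "lattice_point a" "lattice_point b" "lattice_point (s *\<^sub>R a + t *\<^sub>R b)"
    and level: "\<forall>p\<in>P. lattice_point p \<and> p \<noteq> 0 \<longrightarrow> \<alpha> \<bullet> p = c" "c \<noteq> 0"
    and cross: "fst a * snd b - snd a * fst b \<noteq> 0"
    and st: "0 \<le> s" "s < 1" "0 \<le> t" "t < 1"
  shows "s + t = 0 \<or> s + t = 1"
proof -
  have a_level: "\<alpha> \<bullet> a = c" and b_level: "\<alpha> \<bullet> b = c"
    using level lattice P cross by force+
  have level_comb: "\<alpha> \<bullet> (u *\<^sub>R a + w *\<^sub>R b) = (u + w) * c" for u w
    by (simp add: inner_add_right a_level b_level algebra_simps)
  show ?thesis
  proof (cases "s + t \<le> 1")
    case True
    have "s *\<^sub>R a + t *\<^sub>R b \<in> P"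
      using convex_with_zero_scaleR_add_mem[OF P] st True by simp
    then show ?thesis
      using level level_comb[of s t] lattice(3) cross_nonzero_imp_independent[OF cross, of s t]
      by force
  next
    case False
    define z where "z = (1 - s) *\<^sub>R a + (1 - t) *\<^sub>R b"
    have "z \<in> P"
      unfolding z_def using convex_with_zero_scaleR_add_mem[OF P] st False by simp
    moreover have "lattice_point z"
    proof -
      have "z = (a + b) - (s *\<^sub>R a + t *\<^sub>R b)" by (simp add: z_def algebra_simps)
      then show ?thesis using lattice by (simp add: lattice_point_add lattice_point_diff)
    qed
    moreover have "z \<noteq> 0"
      using cross_nonzero_imp_independent[OF cross, of "1 - s" "1 - t"] st by (auto simp: z_def)
    ultimately have "(2 - s - t) * c = c"
      using level level_comb[of "1 - s" "1 - t"] by (simp add: z_def)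
    then show ?thesis using level(2) by simp
  qed
qed

lemma canonical_level_quotient_Ints:
  fixes P :: "(real \<times> real) set" and \<alpha> a b x :: "real \<times> real"
  assumes P: "convex P" "0 \<in> P" "a \<in> P" "b \<in> P"
    and ab: "lattice_point a" "lattice_point b" "a \<noteq> 0" "b \<noteq> 0" "a \<noteq> b"
    and level: "\<forall>p\<in>P. lattice_point p \<and> p \<noteq> 0 \<longrightarrow> \<alpha> \<bullet> p = c" "c \<noteq> 0"
    and x: "lattice_point x"
  shows "\<alpha> \<bullet> x / c \<in> \<int>"
proof -
  have a_level: "\<alpha> \<bullet> a = c" and b_level: "\<alpha> \<bullet> b = c"
    using level ab P by auto
  have cross: "fst a * snd b - snd a * fst b \<noteq> 0"
    using cross_nonzero_if_same_level[OF a_level b_level level(2) ab(5)] .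
  obtain l m where lm: "x = l *\<^sub>R a + m *\<^sub>R b"
    using cross_nonzero_imp_span[OF cross] by blast
  have "lattice_point (frac l *\<^sub>R a + frac m *\<^sub>R b)"
    using lattice_point_frac_combination ab x lm by blast
  then have "frac l + frac m \<in> \<int>"
    using parallelogram_lattice_point_level[OF P ab(1,2) _ level cross] frac_lt_1 by force
  moreover have "l + m = of_int \<lfloor>l\<rfloor> + of_int \<lfloor>m\<rfloor> + (frac l + frac m)"
    by (simp add: frac_def)
  ultimately have "l + m \<in> \<int>" by simp
  moreover have "\<alpha> \<bullet> x = (l + m) * c"
    by (simp add: lm inner_add_right a_level b_level algebra_simps)
  ultimately show ?thesis using level(2) by simp
qed

lemma gor_functional_divide:
  assumes "gor_functional v r m (m * k1) (m * k2)" "m \<noteq> 0"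
  shows "gor_functional v r 1 k1 k2"
proof -
  have "of_int m * (of_int k1 * fst (v i) + of_int k2 * snd (v i)) = (of_int m :: real)"
    if "i \<in> {1..r}" for i
    using assms(1) that unfolding gor_functional_def by (simp add: algebra_simps)
  then show ?thesis
    using assms(2) unfolding gor_functional_def by simp
qed

theorem mainTheorem6:
  fixes v :: "nat \<Rightarrow> real \<times> real" and r :: nat and idx :: int
  assumes "r \<ge> 2"
    and "v 0 = 0"
    and "\<forall>i\<in>{0..r}. rat_point (v i)"
    and "inj_on v {0..r}"
    and "interior (polytope v r) \<noteq> {}"
    and "{x. x extreme_point_of (polytope v r)} = v ` {0..r}"
    and "QGorenstein_index v r idx"
    and "idx \<ge> 2"
    and "\<exists>p q. p \<in> polytope v r \<and> q \<in> polytope v r \<and> lattice_point p \<and> lattice_point q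
               \<and> p \<noteq> 0 \<and> q \<noteq> 0 \<and> p \<noteq> q"
  shows "\<not> canonical v r idx"
proof
  assume "canonical v r idx"
  then obtain a1 a2 where gor: "gor_functional v r idx a1 a2"
    and level: "\<forall>p\<in>polytope v r. lattice_point p \<and> p \<noteq> 0 \<longrightarrow>
                  (of_int a1, of_int a2) \<bullet> p = real_of_int idx"
    unfolding canonical_def by (auto simp: inner_prod_def)
  obtain a b where ab: "a \<in> polytope v r" "b \<in> polytope v r" "lattice_point a" "lattice_point b"
    "a \<noteq> 0" "b \<noteq> 0" "a \<noteq> b" using assms(9) by blast
  have P: "convex (polytope v r)" "0 \<in> polytope v r"
    unfolding polytope_def using assms(2) by (auto intro: hull_inc image_eqI[of 0 v 0])
  have idx: "real_of_int idx \<noteq> 0" using assms(8) by simp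
  have "(of_int a1, of_int a2) \<bullet> x / of_int idx \<in> \<int>" if "lattice_point x" for x
    using canonical_level_quotient_Ints[OF P ab(1,2) ab(3-7) level idx that] .
  from this[of "(1, 0)"] this[of "(0, 1)"] obtain k1 k2
    where "real_of_int a1 / of_int idx = of_int k1" "real_of_int a2 / of_int idx = of_int k2"
    by (auto simp: lattice_point_def elim!: Ints_cases)
  then have "real_of_int a1 = of_int (idx * k1)" "real_of_int a2 = of_int (idx * k2)"
    using idx by (simp_all add: field_simps)
  then have "gor_functional v r idx (idx * k1) (idx * k2)"
    using gor by (simp only: of_int_eq_iff)
  then have "gor_functional v r 1 k1 k2"
    using gor_functional_divide assms(8) by simp
  moreover have "1 \<le> (1::int) \<and> 1 < idx" using assms(8) by simp
  ultimately show False
    using assms(7) unfolding QGorenstein_index_def by blast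
qed

end
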